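(* Let $\Theta=(\theta_k)_{k\ge1}$ be a sequence of positive real numbers such that $g(z)=\sum_{k\ge1}\frac{\theta_k}{k}z^k$ has radius of convergence $r\in(0,\infty)$. Let $(Y_\ell)_{\ell\ge1}$ be independent Poisson random variables, $Y_\ell$ with parameter $\frac{r^\ell\theta_\ell}{\ell}$, let $X_k=\sum_{\ell\mid k}\ell Y_\ell$ and $f(z)=\sum_{k\ge1}\frac{X_k}{k}z^k$. Then almost surely, for every $z\in\mathbb{D}=\{z\in\mathbb{C}:|z|<1\}$, $$\exp(-f(z))=\prod_{k\ge1}(1-z^k)^{Y_k}.$$ *)

theory Defs
  imports "HOL-Analysis.Analysis" "HOL-Probability.Probability"
begin

definition Xdiv :: "(nat \<Rightarrow> 'a \<Rightarrow> nat) \<Rightarrow> nat \<Rightarrow> 'a \<Rightarrow> nat" where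
  "Xdiv Y k \<omega> = (\<Sum>l | l dvd k. l * Y l \<omega>)"

end

theory Submission
  imports Defs
begin

text \<open>
  Taking logarithms, \<open>\<Sum>\<^sub>l Y\<^sub>l Ln (1 - z^l) = - \<Sum>\<^sub>l \<Sum>\<^sub>m Y\<^sub>l z^(l m) / m\<close>, and grouping
  the terms of this double series according to \<open>k = l m\<close> gives \<open>- \<Sum>\<^sub>k X\<^sub>k z^k / k\<close>.
  The rearrangement is legitimate whenever \<open>\<Sum>\<^sub>l Y\<^sub>l |z|^l\<close> converges, i.e. whenever the
  generating series of the \<open>Y\<^sub>l\<close> has radius of convergence at least 1. This holds almost
  surely: for \<open>0 < q < 1\<close> the series \<open>\<Sum>\<^sub>l Y\<^sub>l q^l\<close> has expectation
  \<open>\<Sum>\<^sub>l \<theta>\<^sub>l (r q)^l / l < \<infinity>\<close>, and countably many (rational) \<open>q\<close> suffice.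
\<close>

lemma abs_summable_on_times:
  fixes f :: "'a \<Rightarrow> 'c :: {real_normed_div_algebra, banach, second_countable_topology}"
    and g :: "'b \<Rightarrow> 'c"
  assumes "(\<lambda>a. norm (f a)) summable_on A" and "(\<lambda>b. norm (g b)) summable_on B"
  shows "(\<lambda>p. norm (f (fst p) * g (snd p))) summable_on A \<times> B"
proof -
  have row: "((\<lambda>b. norm (f a * g b)) has_sum norm (f a) * infsum (\<lambda>b. norm (g b)) B) B" for a
    unfolding norm_mult using assms(2) by (intro has_sum_cmult_right has_sum_infsum)
  have row_sum: "infsum (\<lambda>b. norm (f a * g b)) B = norm (f a) * infsum (\<lambda>b. norm (g b)) B" for a
    using row by (rule infsumI)
  have "(\<lambda>a. norm (norm (f a) * infsum (\<lambda>b. norm (g b)) B)) summable_on A"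
    using assms(1) by (simp add: abs_mult summable_on_cmult_left)
  then show ?thesis
    using row Infinite_Sum.abs_summable_on_Sigma_iff[where f = "\<lambda>p. f (fst p) * g (snd p)"
        and A = A and B = "\<lambda>_. B"]
    by (simp add: row_sum has_sum_imp_summable[OF row])
qed

lemma has_sum_Ln_one_minus:
  fixes w :: complex
  assumes "norm w < 1"
  shows "((\<lambda>m. w ^ Suc m / of_nat (Suc m)) has_sum - Ln (1 - w)) UNIV"
proof (rule norm_summable_imp_has_sum)
  have "(\<lambda>m. w ^ m / of_nat m) sums - Ln (1 - w)"
    using sums_minus[OF Ln_series[of "-w"]] assms by (simp add: power_minus')
  then show "(\<lambda>m. w ^ Suc m / of_nat (Suc m)) sums - Ln (1 - w)"
    by (subst sums_Suc_iff) simp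
  have "summable (\<lambda>m. norm w ^ Suc m)"
    using assms by (subst summable_Suc_iff) simp
  then show "summable (\<lambda>m. norm (w ^ Suc m / of_nat (Suc m)))"
    by (rule summable_comparison_test')
      (simp add: norm_divide norm_power divide_le_eq mult_le_cancel_left1 del: of_nat_Suc power_Suc)
qed

text \<open>The double series \<open>\<Sum>\<^sub>l \<Sum>\<^sub>m y\<^sub>l z^(l m) / m\<close> (over \<open>l, m \<ge> 1\<close>) for
  \<open>- Ln (\<Prod>\<^sub>l (1 - z^l) ^ y\<^sub>l)\<close>, with \<open>(l, m)\<close> stored as \<open>(l - 1, m - 1)\<close>.\<close>

definition log_prod_term :: "(nat \<Rightarrow> nat) \<Rightarrow> complex \<Rightarrow> nat \<times> nat \<Rightarrow> complex" where
  "log_prod_term y z = (\<lambda>(a, m). of_nat (y (Suc a)) * z ^ (Suc a * Suc m) / of_nat (Suc m))"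

lemma log_prod_term_abs_summable:
  assumes "norm z < 1" and "summable (\<lambda>l. real (y l) * norm z ^ l)"
  shows "(\<lambda>p. norm (log_prod_term y z p)) summable_on UNIV"
proof -
  define t where "t = norm z"
  have t: "0 \<le> t" "t < 1" using assms(1) by (auto simp: t_def)
  have "summable (\<lambda>a. real (y (Suc a)) * t ^ Suc a)"
    using assms(2) unfolding t_def by (subst summable_Suc_iff)
  then have "(\<lambda>a. norm (real (y (Suc a)) * t ^ Suc a)) summable_on UNIV"
    using t by (intro summable_nonneg_imp_summable_on) auto
  moreover have "(\<lambda>m. norm (t ^ m)) summable_on UNIV"
    using t by (intro summable_nonneg_imp_summable_on) auto
  ultimately have "(\<lambda>p. norm (real (y (Suc (fst p))) * t ^ Suc (fst p) * t ^ snd p)) summable_on UNIV"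
    using abs_summable_on_times by fastforce
  then show ?thesis
  proof (rule Infinite_Sum.abs_summable_on_comparison_test)
    fix p :: "nat \<times> nat"
    obtain a m where p: "p = (a, m)" by (cases p)
    have "norm (log_prod_term y z p) = real (y (Suc a)) * t ^ (Suc a * Suc m) / real (Suc m)"
      by (simp add: log_prod_term_def p norm_divide norm_mult norm_power t_def del: of_nat_Suc)
    also have "\<dots> \<le> real (y (Suc a)) * t ^ (Suc a * Suc m)"
      using t divide_left_mono[of 1 "real (Suc m)"] by simp
    also have "\<dots> \<le> real (y (Suc a)) * (t ^ Suc a * t ^ m)"
      unfolding power_add[symmetric] using t by (intro mult_left_mono power_decreasing) auto
    finally show "norm (log_prod_term y z p) \<le> norm (real (y (Suc (fst p))) * t ^ Suc (fst p) * t ^ snd p)"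
      using t by (simp add: p abs_mult mult.assoc)
  qed
qed

lemma has_sum_log_prod_term_row:
  assumes "norm z < 1"
  shows "((\<lambda>m. log_prod_term y z (a, m)) has_sum - (of_nat (y (Suc a)) * Ln (1 - z ^ Suc a))) UNIV"
proof -
  have "norm (z ^ Suc a) < 1"
    using assms by (simp add: norm_power power_less_one_iff del: power_Suc)
  from has_sum_cmult_right[OF has_sum_Ln_one_minus[OF this], of "of_nat (y (Suc a))"]
  show ?thesis
    by (simp only: log_prod_term_def case_prod_conv power_mult times_divide_eq_right mult_minus_right)
qed

text \<open>In the shifted indexing of \<^const>\<open>log_prod_term\<close>: \<open>(l, m) \<mapsto> (l m, l)\<close>, a product and one of its divisors.\<close>

lemma bij_betw_divisor_pairs:
  "bij_betw (\<lambda>(a, m). (Suc a * Suc m - 1, Suc a)) UNIV (SIGMA k:UNIV. {d. d dvd Suc k})"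
proof (rule bij_betw_byWitness[where f' = "\<lambda>(k, d). (d - 1, Suc k div d - 1)"])
  have "Suc (d - 1) * Suc (Suc k div d - 1) - 1 = k \<and> Suc (d - 1) = d" if dvd: "d dvd Suc k" for k d
  proof -
    obtain e where e: "Suc k = d * e" using dvd by blast
    then have "0 < d" "0 < e" by (metis nat.distinct(1) mult_is_0 neq0_conv)+
    then have "Suc k div d = e" "Suc (d - 1) = d" "Suc (e - 1) = e"
      using e by simp_all
    then show ?thesis using e by simp
  qed
  then show "\<forall>p\<in>SIGMA k:UNIV. {d. d dvd Suc k}.
      (\<lambda>(a, m). (Suc a * Suc m - 1, Suc a)) ((\<lambda>(k, d). (d - 1, Suc k div d - 1)) p) = p"
    by auto
next
  have "Suc (Suc a * Suc m - 1) = Suc a * Suc m" for a m :: nat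
    by simp
  then show "\<forall>p\<in>UNIV. (\<lambda>(k, d). (d - 1, Suc k div d - 1)) ((\<lambda>(a, m). (Suc a * Suc m - 1, Suc a)) p) = p"
    and "(\<lambda>(a, m). (Suc a * Suc m - 1, Suc a)) ` UNIV \<subseteq> (SIGMA k:UNIV. {d. d dvd Suc k})"
    by (auto simp del: mult_Suc mult_Suc_right)
qed auto

lemma sums_divisor_series:
  assumes "norm z < 1" and "summable (\<lambda>l. real (y l) * norm z ^ l)"
  shows "(\<lambda>k. of_nat (\<Sum>l | l dvd Suc k. l * y l) / of_nat (Suc k) * z ^ Suc k)
           sums infsum (log_prod_term y z) UNIV"
proof -
  define T where "T = infsum (log_prod_term y z) UNIV"
  define F where "F = (\<lambda>(k, d). of_nat (d * y d) / of_nat (Suc k) * z ^ Suc k :: complex)"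
  have "(log_prod_term y z has_sum T) UNIV"
    unfolding T_def
    by (rule has_sum_infsum[OF abs_summable_summable[OF log_prod_term_abs_summable[OF assms]]])
  moreover have "(\<lambda>p. F ((\<lambda>(a, m). (Suc a * Suc m - 1, Suc a)) p)) = log_prod_term y z"
  proof (rule ext, clarify)
    fix a m :: nat
    have "Suc (Suc a * Suc m - 1) = Suc a * Suc m" by simp
    then show "F (Suc a * Suc m - 1, Suc a) = log_prod_term y z (a, m)"
      by (simp only: F_def log_prod_term_def case_prod_conv of_nat_mult)
        (simp add: field_simps del: of_nat_Suc mult_Suc mult_Suc_right)
  qed
  ultimately have "(F has_sum T) (SIGMA k:UNIV. {d. d dvd Suc k})"
    using has_sum_reindex_bij_betw[OF bij_betw_divisor_pairs, of F T] by simp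
  then have "((\<lambda>k. \<Sum>d | d dvd Suc k. F (k, d)) has_sum T) UNIV"
    by (rule has_sum_Sigma') (simp add: has_sum_finite)
  also have "(\<lambda>k. \<Sum>d | d dvd Suc k. F (k, d))
      = (\<lambda>k. of_nat (\<Sum>l | l dvd Suc k. l * y l) / of_nat (Suc k) * z ^ Suc k)"
    by (simp add: fun_eq_iff F_def sum_distrib_right sum_divide_distrib del: of_nat_Suc)
  finally show ?thesis
    unfolding T_def by (rule has_sum_imp_sums)
qed

lemma sums_log_factors:
  assumes "norm z < 1" and "summable (\<lambda>l. real (y l) * norm z ^ l)"
  shows "(\<lambda>k. of_nat (y (Suc k)) * Ln (1 - z ^ Suc k)) sums - infsum (log_prod_term y z) UNIV"
proof -
  have "(log_prod_term y z has_sum infsum (log_prod_term y z) UNIV) (UNIV \<times> UNIV)"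
    using has_sum_infsum[OF abs_summable_summable[OF log_prod_term_abs_summable[OF assms]]]
    by simp
  then have "((\<lambda>k. - (of_nat (y (Suc k)) * Ln (1 - z ^ Suc k))) has_sum
      infsum (log_prod_term y z) UNIV) UNIV"
    by (rule has_sum_Sigma'[OF _ has_sum_log_prod_term_row[OF assms(1)]])
  from sums_minus[OF has_sum_imp_sums[OF this]] show ?thesis
    by simp
qed

lemma sums_imp_has_prod_power:
  fixes w :: "nat \<Rightarrow> complex" and n :: "nat \<Rightarrow> nat"
  assumes "\<And>k. w k \<noteq> 0" and "(\<lambda>k. of_nat (n k) * Ln (w k)) sums L"
  shows "(\<lambda>k. w k ^ n k) has_prod exp L"
proof -
  have "(\<lambda>k. exp (of_nat (n k) * Ln (w k))) has_prod exp L"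
    using sums_imp_has_prod_exp[OF assms(2)] by (simp add: has_prod_def)
  moreover have "exp (of_nat (n k) * Ln (w k)) = w k ^ n k" for k
    using assms(1) by (simp add: exp_of_nat_mult)
  ultimately show ?thesis
    by simp
qed

lemma nn_integral_poisson_pmf:
  assumes "0 < c"
  shows "(\<integral>\<^sup>+x. ennreal (real x) \<partial>measure_pmf (poisson_pmf c)) = ennreal c"
proof -
  define g where "g n = c ^ n / fact n * exp (- c) * real n" for n
  have "(\<lambda>n. c ^ n / fact n) sums exp c"
    using exp_converges[of c] by (simp add: divide_inverse_commute)
  from sums_mult[OF this, of "c * exp (- c)"] have "(\<lambda>n. g (Suc n)) sums c"
    by (simp add: g_def exp_minus field_simps del: of_nat_Suc)
  moreover have "g 0 = 0"
    by (simp add: g_def)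
  ultimately have g: "g sums c"
    using sums_Suc_iff[of g c] by simp
  have g_nonneg: "0 \<le> g n" for n
    using assms by (simp add: g_def)
  have "(\<integral>\<^sup>+x. ennreal (real x) \<partial>measure_pmf (poisson_pmf c)) = (\<integral>\<^sup>+n. ennreal (g n) \<partial>count_space UNIV)"
    unfolding nn_integral_measure_pmf using assms
    by (intro nn_integral_cong) (simp add: g_def ennreal_mult'[symmetric])
  also have "\<dots> = ennreal c"
    using g g_nonneg by (simp add: nn_integral_count_space_nat suminf_ennreal2 sums_iff)
  finally show ?thesis .
qed

lemma AE_summable_if_nn_integral_suminf_finite:
  assumes "\<And>n. f n \<in> borel_measurable M" and "\<And>n x. 0 \<le> f n x"
    and "(\<Sum>n. \<integral>\<^sup>+x. ennreal (f n x) \<partial>M) \<noteq> \<infinity>"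
  shows "AE x in M. summable (\<lambda>n. f n x)"
proof -
  have "(\<integral>\<^sup>+x. (\<Sum>n. ennreal (f n x)) \<partial>M) \<noteq> \<infinity>"
    using assms by (simp add: nn_integral_suminf)
  then have "AE x in M. (\<Sum>n. ennreal (f n x)) \<noteq> \<infinity>"
    using assms(1) by (intro nn_integral_noteq_infinite) measurable
  then show ?thesis
    by eventually_elim (rule summable_suminf_not_top[OF assms(2)], simp)
qed

lemma AE_summable_poisson_weighted:
  fixes Y :: "nat \<Rightarrow> 'a \<Rightarrow> nat"
  assumes "\<And>l. Y l \<in> measurable M (count_space UNIV)"
    and "\<And>l. distr M (count_space UNIV) (Y l) = measure_pmf (poisson_pmf (c l))"
    and "\<And>l. 0 < c l" and "\<And>l. 0 \<le> a l" and "summable (\<lambda>l. c l * a l)"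
  shows "AE \<omega> in M. summable (\<lambda>l. real (Y l \<omega>) * a l)"
proof (rule AE_summable_if_nn_integral_suminf_finite)
  show "(\<lambda>\<omega>. real (Y l \<omega>) * a l) \<in> borel_measurable M" for l
    by (rule measurable_compose[OF assms(1)]) simp
  show "0 \<le> real (Y l \<omega>) * a l" for l \<omega>
    using assms(4) by simp
  have "(\<integral>\<^sup>+\<omega>. ennreal (real (Y l \<omega>) * a l) \<partial>M) = ennreal (c l * a l)" for l
  proof -
    have "(\<integral>\<^sup>+\<omega>. ennreal (real (Y l \<omega>) * a l) \<partial>M)
        = (\<integral>\<^sup>+x. ennreal (real x) * ennreal (a l) \<partial>distr M (count_space UNIV) (Y l))"
      using assms(4)[of l] by (subst nn_integral_distr[OF assms(1)]) (simp_all add: ennreal_mult)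
    also have "\<dots> = (\<integral>\<^sup>+x. ennreal (real x) \<partial>measure_pmf (poisson_pmf (c l))) * ennreal (a l)"
      unfolding assms(2) by (rule nn_integral_multc) simp
    also have "\<dots> = ennreal (c l * a l)"
      using assms(3)[of l] assms(4)[of l] by (simp add: nn_integral_poisson_pmf ennreal_mult)
    finally show ?thesis .
  qed
  moreover have "(\<Sum>l. ennreal (c l * a l)) \<noteq> \<infinity>"
    using ennreal_suminf_neq_top[OF assms(5) mult_nonneg_nonneg[OF less_imp_le[OF assms(3)] assms(4)]]
    by simp
  ultimately show "(\<Sum>l. \<integral>\<^sup>+\<omega>. ennreal (real (Y l \<omega>) * a l) \<partial>M) \<noteq> \<infinity>"
    by simp
qed

lemma one_le_conv_radius_if_summable_Rats:
  fixes a :: "nat \<Rightarrow> real"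
  assumes "\<And>q. q \<in> \<rat> \<Longrightarrow> 0 < q \<Longrightarrow> q < 1 \<Longrightarrow> summable (\<lambda>l. a l * q ^ l)"
  shows "1 \<le> conv_radius a"
proof (rule conv_radius_geI_ex')
  fix r :: real
  assume r: "0 < r" "ereal r < 1"
  obtain q where q: "q \<in> \<rat>" "r < q" "q < 1"
    using Rats_dense_in_real[of r 1] r(2) by auto
  have "summable (\<lambda>l. a l * q ^ l)"
    using q r(1) by (intro assms) auto
  then have "ereal (norm q) \<le> conv_radius a"
    by (rule conv_radius_geI)
  then have "ereal (norm r) < conv_radius a"
    using q(2) r(1) by (simp add: less_le_trans[of _ "ereal q"])
  then show "summable (\<lambda>l. a l * of_real r ^ l)"
    by (intro summable_in_conv_radius) simp
qed

lemma AE_one_le_conv_radius_poisson: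
  fixes Y :: "nat \<Rightarrow> 'a \<Rightarrow> nat"
  assumes "\<And>l. Y l \<in> measurable M (count_space UNIV)"
    and "\<And>l. distr M (count_space UNIV) (Y l) = measure_pmf (poisson_pmf (c l))"
    and "\<And>l. 0 < c l" and "1 \<le> conv_radius c"
  shows "AE \<omega> in M. 1 \<le> conv_radius (\<lambda>l. real (Y l \<omega>))"
proof -
  have "AE \<omega> in M. summable (\<lambda>l. real (Y l \<omega>) * q ^ l)" if q: "q \<in> \<rat> \<inter> {0<..<1}" for q
  proof -
    have "ereal (norm q) < conv_radius c"
      using q assms(4) by (simp add: less_le_trans[of _ 1])
    then have "summable (\<lambda>l. c l * q ^ l)"
      by (rule summable_in_conv_radius)
    with q show ?thesis
      by (intro AE_summable_poisson_weighted[OF assms(1,2,3)]) auto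
  qed
  moreover have "countable (\<rat> \<inter> {0<..<1 :: real})"
    using countable_rat by blast
  ultimately have "AE \<omega> in M. \<forall>q \<in> \<rat> \<inter> {0<..<1}. summable (\<lambda>l. real (Y l \<omega>) * q ^ l)"
    by (simp add: AE_ball_countable)
  then show ?thesis
    by eventually_elim (auto intro: one_le_conv_radius_if_summable_Rats)
qed

lemma divisor_series_has_prod:
  fixes y :: "nat \<Rightarrow> nat" and z :: complex
  assumes "1 \<le> conv_radius (\<lambda>l. real (y l))" and "norm z < 1"
  shows "\<exists>s. (\<lambda>k. of_nat (\<Sum>l | l dvd Suc k. l * y l) / of_nat (Suc k) * z ^ Suc k) sums s
           \<and> (\<lambda>k. (1 - z ^ Suc k) ^ y (Suc k)) has_prod exp (- s)"
proof -
  have "summable (\<lambda>l. norm (real (y l) * norm z ^ l))"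
    using less_le_trans[OF _ assms(1), of "ereal (norm z)"] assms(2)
    by (intro abs_summable_in_conv_radius) simp
  then have y: "summable (\<lambda>l. real (y l) * norm z ^ l)"
    by simp
  have "norm (z ^ Suc k) < 1" for k
    using assms(2) by (simp add: norm_power power_less_one_iff del: power_Suc)
  then have nonzero: "1 - z ^ Suc k \<noteq> 0" for k
    by (metis norm_one order.irrefl right_minus_eq)
  show ?thesis
    using sums_divisor_series[OF assms(2) y]
      sums_imp_has_prod_power[OF nonzero sums_log_factors[OF assms(2) y]]
    by blast
qed

theorem mainTheorem7:
  fixes M :: "'a measure" and \<theta> :: "nat \<Rightarrow> real" and r :: real
    and Y :: "nat \<Rightarrow> 'a \<Rightarrow> nat"
  assumes "prob_space M"
    and "\<forall>k\<ge>1. \<theta> k > 0"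
    and "conv_radius (\<lambda>k. if k = 0 then 0 else \<theta> k / real k) = ereal r"
    and "0 < r"
    and "prob_space.indep_vars M (\<lambda>_. count_space UNIV) Y {1..}"
    and "\<forall>l\<ge>1. distr M (count_space UNIV) (Y l)
                 = measure_pmf (poisson_pmf (r ^ l * \<theta> l / real l))"
  shows "AE \<omega> in M. \<forall>z::complex \<in> ball 0 1. \<exists>s.
           (\<lambda>k. of_nat (Xdiv Y (Suc k) \<omega>) / of_nat (Suc k) * z ^ Suc k) sums s
         \<and> (\<lambda>k. (1 - z ^ Suc k) ^ Y (Suc k) \<omega>) has_prod exp (- s)"
proof -
  interpret prob_space M by fact
  define rate where "rate l = r ^ l * \<theta> l / real l" for l
  \<comment> \<open>\<open>rate 0 = 0\<close>, because division by zero yields zero\<close>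
  have "rate = (\<lambda>l. r ^ l * (if l = 0 then 0 else \<theta> l / real l))"
    by (auto simp: fun_eq_iff rate_def)
  then have "conv_radius rate = 1"
    using assms(3,4) by (simp add: conv_radius_mult_power)
  then have "1 \<le> conv_radius (\<lambda>l. rate (l + 1))"
    by (simp only: conv_radius_shift)
  \<comment> \<open>of the independence hypothesis only the measurability of the \<open>Y\<^sub>l\<close> is needed\<close>
  then have "AE \<omega> in M. 1 \<le> conv_radius (\<lambda>l. real (Y (l + 1) \<omega>))"
    using assms(2,4,5,6)
    by (intro AE_one_le_conv_radius_poisson) (auto simp: indep_vars_def rate_def)
  then show ?thesis
  proof eventually_elim
    case (elim \<omega>)
    then have radius: "1 \<le> conv_radius (\<lambda>l. real (Y l \<omega>))"
      using conv_radius_shift[of "\<lambda>l. real (Y l \<omega>)" 1] by simp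
    show ?case
      unfolding Xdiv_def Ball_def mem_ball_0 using divisor_series_has_prod[OF radius] by blast
  qed
qed

end
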